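(* Let $g(x)=1-(1-x^2)^4$ for $|x|\le1$ and $g(x)=1$ otherwise. For $p_o\in]0,\sqrt2[$ let $\mathcal{T}(p_o)$ be the smallest period of the (periodic) function $q$, where $(q,p)$ is the global solution of $\dot q=p$, $\dot p=-g'(q)$ with $(q(0),p(0))=(0,p_o)$. Then: (i) $\mathcal{T}$ is continuous on $]0,\sqrt2[$; (ii) $\mathcal{T}$ is strictly increasing; (iii) $\inf_{p_o\in]0,\sqrt2[}\mathcal{T}(p_o)=\pi/\sqrt2$; (iv) $\lim_{p_o\to\sqrt2}\mathcal{T}(p_o)=+\infty$. *)

theory Defs
  imports "HOL-Analysis.Analysis"
begin

definition g :: "real \<Rightarrow> real" where
  "g x = (if \<bar>x\<bar> \<le> 1 then 1 - (1 - x\<^sup>2) ^ 4 else 1)"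

definition is_solution :: "real \<Rightarrow> (real \<Rightarrow> real) \<Rightarrow> (real \<Rightarrow> real) \<Rightarrow> bool" where
  "is_solution po q p \<longleftrightarrow>
     q 0 = 0 \<and> p 0 = po \<and>
     (\<forall>t. (q has_real_derivative p t) (at t)) \<and>
     (\<forall>t. (p has_real_derivative - deriv g (q t)) (at t))"

definition sol_q :: "real \<Rightarrow> real \<Rightarrow> real" where
  "sol_q po = fst (THE qp. is_solution po (fst qp) (snd qp))"

definition min_period :: "(real \<Rightarrow> real) \<Rightarrow> real" where
  "min_period q = Inf {T. T > 0 \<and> (\<forall>t. q (t + T) = q t)}"

definition period_T :: "real \<Rightarrow> real" where
  "period_T po = min_period (sol_q po)"

end

theory Submission
  imports Defs "HOL-Complex_Analysis.Conformal_Mappings" "HOL-Real_Asymp.Real_Asymp"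
begin

(* The energy p^2 / 2 + g q is conserved, and equals e^2 for the initial momentum p_o = sqrt 2 * e,
   0 < e < 1. On [-1, 1] the potential is the square of the increasing bijection
   G x = x * sqrt (1 + w + w^2 + w^3), w = 1 - x^2, of [-1, 1]. Hence the energy level is a circle in the
   coordinates (G q, p / sqrt 2), and writing G q = e * sin theta, p = sqrt 2 * e * cos theta turns the
   equations of motion into d theta / dt = sqrt 2 / kappa (e * sin theta), where kappa is the derivative of
   the inverse of G. So q is periodic with minimal period T = (1 / sqrt 2) * integral of kappa (e * sin theta)
   over [0, 2 pi]. The function kappa is even, strictly increasing in |s|, kappa 0 = 1/2, and it blows up like
   (1 - s) powr (-3/4) at s = 1. This gives continuity and strict monotonicity of T, the infimum
   T(0+) = pi / sqrt 2, and the growth T >= c * (1 - e) powr (-1/4) as e tends to 1. *)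

lemma gronwall_zero:
  fixes u u' :: "real \<Rightarrow> real"
  assumes deriv: "\<And>t. (u has_real_derivative u' t) (at t)"
    and bound: "\<And>t. \<bar>u' t\<bar> \<le> L * u t"
    and nonneg: "\<And>t. 0 \<le> u t"
    and "u 0 = 0"
  shows "u t = 0"
proof -
  have "u t \<le> 0"
  proof (cases "0 \<le> t")
    case True
    have "(\<lambda>x. u x * exp (- L * x)) t \<le> (\<lambda>x. u x * exp (- L * x)) 0"
    proof (rule DERIV_nonpos_imp_nonincreasing[of 0 t "\<lambda>x. u x * exp (- L * x)", OF True])
      fix x
      have "u' x - L * u x \<le> 0"
        using bound[of x] by linarith
      moreover have "((\<lambda>x. u x * exp (- L * x)) has_real_derivative (u' x - L * u x) * exp (- L * x)) (at x)"
        by (auto intro!: derivative_eq_intros deriv simp: algebra_simps)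
      ultimately show "\<exists>y. ((\<lambda>x. u x * exp (- L * x)) has_real_derivative y) (at x) \<and> y \<le> 0"
        by (auto simp: mult_nonpos_nonneg)
    qed
    then show ?thesis
      using \<open>u 0 = 0\<close> by (simp add: mult_le_0_iff)
  next
    case False
    have "(\<lambda>x. u x * exp (L * x)) t \<le> (\<lambda>x. u x * exp (L * x)) 0"
    proof (rule DERIV_nonneg_imp_nondecreasing[of t 0 "\<lambda>x. u x * exp (L * x)"])
      show "t \<le> 0"
        using False by simp
      fix x
      have "0 \<le> u' x + L * u x"
        using bound[of x] by linarith
      moreover have "((\<lambda>x. u x * exp (L * x)) has_real_derivative (u' x + L * u x) * exp (L * x)) (at x)"
        by (auto intro!: derivative_eq_intros deriv simp: algebra_simps)
      ultimately show "\<exists>y. ((\<lambda>x. u x * exp (L * x)) has_real_derivative y) (at x) \<and> 0 \<le> y"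
        by auto
    qed
    then show ?thesis
      using \<open>u 0 = 0\<close> by (simp add: mult_le_0_iff)
  qed
  with nonneg[of t] show ?thesis
    by simp
qed

lemma exists_antiderivative:
  fixes f :: "real \<Rightarrow> real"
  assumes "\<And>x. isCont f x"
  shows "\<exists>F. F 0 = 0 \<and> (\<forall>x. (F has_real_derivative f x) (at x))"
proof -
  obtain F where "\<forall>x::real. -\<infinity> < x \<longrightarrow> x < \<infinity> \<longrightarrow> (F has_vector_derivative f x) (at x)"
    using einterval_antiderivative[of "-\<infinity>" "\<infinity>" f] assms by auto
  then have "(F has_real_derivative f x) (at x)" for x
    by (simp add: has_real_derivative_iff_has_vector_derivative)
  then have "((\<lambda>x. F x - F 0) has_real_derivative f x) (at x)" for x
    by (auto intro!: derivative_eq_intros)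
  then show ?thesis
    by (intro exI[of _ "\<lambda>x. F x - F 0"]) auto
qed

lemma DERIV_ge_imp_diff_ge:
  fixes F f :: "real \<Rightarrow> real"
  assumes "\<And>x. (F has_real_derivative f x) (at x)" "\<And>x. c \<le> f x" "a \<le> b"
  shows "c * (b - a) \<le> F b - F a"
proof -
  have "(\<lambda>x. F x - c * x) a \<le> (\<lambda>x. F x - c * x) b"
  proof (rule DERIV_nonneg_imp_nondecreasing[of a b "\<lambda>x. F x - c * x", OF \<open>a \<le> b\<close>])
    fix x
    have "((\<lambda>x. F x - c * x) has_real_derivative f x - c) (at x)"
      using assms(1) by (auto intro!: derivative_eq_intros)
    then show "\<exists>y. ((\<lambda>x. F x - c * x) has_real_derivative y) (at x) \<and> 0 \<le> y"
      using assms(2)[of x] by (intro exI[of _ "f x - c"]) simp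
  qed
  then show ?thesis
    by (simp add: algebra_simps)
qed

lemma surj_if_DERIV_ge_pos:
  fixes F f :: "real \<Rightarrow> real"
  assumes deriv: "\<And>x. (F has_real_derivative f x) (at x)" and "\<And>x. c \<le> f x" "0 < c"
  shows "surj F"
proof -
  have "y \<in> range F" for y
  proof -
    define d where "d = \<bar>y - F 0\<bar> / c"
    have "0 \<le> d" "y - F 0 \<le> c * d" "F 0 - y \<le> c * d"
      using \<open>0 < c\<close> by (simp_all add: d_def)
    moreover have "c * d \<le> F d - F 0" "c * d \<le> F 0 - F (- d)"
      using DERIV_ge_imp_diff_ge[OF assms(1,2), of 0 d] DERIV_ge_imp_diff_ge[OF assms(1,2), of "- d" 0]
        \<open>0 \<le> d\<close> by simp_all
    ultimately have "F (- d) \<le> y" "y \<le> F d" "- d \<le> d"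
      by auto
    moreover have "continuous_on {-d..d} F"
      using deriv by (meson DERIV_continuous continuous_at_imp_continuous_on)
    ultimately show ?thesis
      using IVT'[of F "- d" y d] by auto
  qed
  then show ?thesis
    by auto
qed

lemma strict_mono_if_DERIV_pos:
  fixes F f :: "real \<Rightarrow> real"
  assumes "\<And>x. (F has_real_derivative f x) (at x)" "\<And>x. 0 < f x"
  shows "strict_mono F"
proof (rule strict_monoI)
  fix x y :: real
  assume "x < y"
  then show "F x < F y"
  proof (rule DERIV_pos_imp_increasing)
    fix z
    show "\<exists>d. (F has_real_derivative d) (at z) \<and> 0 < d"
      using assms by (intro exI[of _ "f z"]) simp
  qed
qed

lemma antiderivative_periodic_shift:
  fixes F f :: "real \<Rightarrow> real"
  assumes deriv: "\<And>x. (F has_real_derivative f x) (at x)" and periodic: "\<And>x. f (x + p) = f x"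
  shows "F (x + p) = F x + (F p - F 0)"
proof -
  have "((\<lambda>x. F (x + p) - F x) has_real_derivative f (x + p) - f x) (at x)" for x
    using deriv[of "x + p"] deriv[of x] by (intro DERIV_diff) (simp_all add: DERIV_shift)
  then have "((\<lambda>x. F (x + p) - F x) has_real_derivative 0) (at x)" for x
    by (simp add: periodic)
  from DERIV_isconst_all[OF allI[OF this], of x 0] show ?thesis
    by simp
qed

lemma cos_ge_1_minus_sq: "1 - x\<^sup>2 / 2 \<le> cos (x::real)"
proof -
  have "\<bar>sin (x / 2)\<bar>\<^sup>2 \<le> \<bar>x / 2\<bar>\<^sup>2"
    using abs_sin_x_le_abs_x by (rule power_mono) simp
  then show ?thesis
    using cos_double_sin[of "x / 2"] by (simp add: power_divide)
qed

lemma sin_less_1: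
  assumes "pi / 2 < x" "x < pi / 2 + 2 * pi"
  shows "sin x < 1"
proof -
  have "sin x \<noteq> 1"
  proof
    assume "sin x = 1"
    then obtain n :: int where "x = (2 * of_int n + 1 / 2) * pi"
      using sin_eq_1 by auto
    with assms have "0 < of_int n * (2 * pi)" "of_int n * (2 * pi) < 1 * (2 * pi)"
      by (simp_all add: algebra_simps)
    then have "0 < n" "n < 1"
      by (simp_all add: zero_less_mult_iff mult_less_cancel_right)
    then show False
      by simp
  qed
  then show ?thesis
    using sin_le_one[of x] by linarith
qed

section \<open>The force and uniqueness of solutions\<close>

definition dg :: "real \<Rightarrow> real" where
  "dg x = (if \<bar>x\<bar> \<le> 1 then 8 * x * (1 - x\<^sup>2) ^ 3 else 0)"

lemma DERIV_g: "(g has_real_derivative dg x) (at x)"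
proof -
  let ?S = "{x::real. \<bar>x\<bar> \<le> 1}" and ?T = "{x::real. 1 < \<bar>x\<bar>}"
  have "closure ?S = ?S"
    by (intro closure_closed closed_Collect_le continuous_intros)
  moreover have "closure ?T \<subseteq> {x. 1 \<le> \<bar>x\<bar>}"
    by (intro closure_minimal closed_Collect_le continuous_intros) auto
  ultimately have boundary: "y = 1 \<or> y = -1" if "y \<in> closure ?S" "y \<in> closure ?T" for y
    using that by force
  have poly: "((\<lambda>x. 1 - (1 - x\<^sup>2) ^ 4) has_derivative (*) (8 * x * (1 - x\<^sup>2) ^ 3)) (at x within A)"
    for x :: real and A
    by (rule has_field_derivative_imp_has_derivative, rule DERIV_cong)
       (auto intro!: derivative_eq_intros simp: power2_eq_square algebra_simps)
  have "((\<lambda>x. if x \<in> ?S then 1 - (1 - x\<^sup>2) ^ 4 else 1) has_derivative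
      (if x \<in> ?S then (*) (8 * x * (1 - x\<^sup>2) ^ 3) else (\<lambda>_. 0))) (at x within ?S \<union> ?T)"
    by (rule has_derivative_If_within_closures[where f'="\<lambda>x. (*) (8 * x * (1 - x\<^sup>2) ^ 3)"])
       (auto intro: poly dest!: boundary)
  moreover have "?S \<union> ?T = UNIV" "(*) (0::real) = (\<lambda>_. 0)" by auto
  ultimately show ?thesis
    by (auto simp: g_def[abs_def] dg_def has_field_derivative_def)
qed

lemma deriv_g: "deriv g = dg"
  using DERIV_g by (intro ext DERIV_imp_deriv)

lemma dg_clamp:
  fixes x :: real
  defines "c \<equiv> max (-1) (min 1 x)"
  shows "dg x = 8 * c * (1 - c\<^sup>2) ^ 3"
proof -
  consider "\<bar>x\<bar> \<le> 1" | "1 < x" | "x < -1"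
    by linarith
  then show ?thesis
    by cases (simp_all add: dg_def c_def)
qed

lemma dg_lipschitz: "\<bar>dg x - dg y\<bar> \<le> 56 * \<bar>x - y\<bar>"
proof -
  let ?P = "\<lambda>x::real. 8 * x * (1 - x\<^sup>2) ^ 3"
  let ?c = "\<lambda>x::real. max (-1) (min 1 x)"
  have "norm (?P a - ?P b) \<le> 56 * norm (a - b)" if "a \<in> {-1..1}" "b \<in> {-1..1}" for a b
  proof (rule field_differentiable_bound[OF convex_real_interval(5) _ _ that])
    fix z :: real assume "z \<in> {-1..1}"
    then have "0 \<le> 1 - z\<^sup>2" "1 - z\<^sup>2 \<le> 1" "z\<^sup>2 \<le> 1"
      by (auto simp: abs_square_le_1)
    then have "0 \<le> (1 - z\<^sup>2) ^ 3" "(1 - z\<^sup>2) ^ 3 \<le> 1" "0 \<le> z\<^sup>2 * (1 - z\<^sup>2)\<^sup>2" "z\<^sup>2 * (1 - z\<^sup>2)\<^sup>2 \<le> 1"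
      by (auto simp: power_le_one mult_le_one)
    then show "norm (8 * (1 - z\<^sup>2) ^ 3 - 48 * z\<^sup>2 * (1 - z\<^sup>2)\<^sup>2) \<le> 56"
      unfolding real_norm_def abs_le_iff mult.assoc by (intro conjI; linarith)
  next
    fix z :: real
    show "(?P has_real_derivative 8 * (1 - z\<^sup>2) ^ 3 - 48 * z\<^sup>2 * (1 - z\<^sup>2)\<^sup>2) (at z within {-1..1})"
      by (rule derivative_eq_intros refl)+ (simp add: power2_eq_square power3_eq_cube algebra_simps)
  qed
  then have "\<bar>dg x - dg y\<bar> \<le> 56 * \<bar>?c x - ?c y\<bar>"
    by (simp add: dg_clamp)
  also have "\<dots> \<le> 56 * \<bar>x - y\<bar>"
    by auto
  finally show ?thesis .
qed

lemma is_solution_unique: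
  assumes "is_solution po q1 p1" "is_solution po q2 p2"
  shows "q1 = q2 \<and> p1 = p2"
proof -
  note sol = assms[unfolded is_solution_def deriv_g]
  define u where "u t = (q1 t - q2 t)\<^sup>2 + (p1 t - p2 t)\<^sup>2" for t
  define u' where "u' t = 2 * (q1 t - q2 t) * (p1 t - p2 t) + 2 * (p1 t - p2 t) * (dg (q2 t) - dg (q1 t))" for t
  have "(u has_real_derivative u' t) (at t)" for t
    unfolding u_def u'_def using sol
    by (auto intro!: derivative_eq_intros simp: algebra_simps)
  moreover have "\<bar>u' t\<bar> \<le> 57 * u t" for t
  proof -
    define a b where "a = q1 t - q2 t" and "b = p1 t - p2 t"
    have "\<bar>u' t\<bar> \<le> 2 * \<bar>a\<bar> * \<bar>b\<bar> + 2 * \<bar>b\<bar> * \<bar>dg (q2 t) - dg (q1 t)\<bar>"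
      unfolding u'_def a_def[symmetric] b_def[symmetric] by (simp add: abs_mult abs_triangle_ineq[THEN order_trans])
    also have "\<dots> \<le> 2 * \<bar>a\<bar> * \<bar>b\<bar> + 2 * \<bar>b\<bar> * (56 * \<bar>a\<bar>)"
      using dg_lipschitz[of "q2 t" "q1 t"] by (intro add_left_mono mult_left_mono) (auto simp: a_def abs_minus_commute)
    also have "\<dots> \<le> 57 * (a\<^sup>2 + b\<^sup>2)"
      using sum_squares_bound[of "\<bar>a\<bar>" "\<bar>b\<bar>"] by simp
    finally show ?thesis
      by (simp add: u_def a_def b_def)
  qed
  moreover have "0 \<le> u t" for t
    by (simp add: u_def)
  moreover have "u 0 = 0"
    using sol by (simp add: u_def)
  ultimately have "u t = 0" for t
    by (rule gronwall_zero)
  then show ?thesis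
    by (simp add: u_def fun_eq_iff)
qed

lemma sol_q_eqI: "is_solution po q p \<Longrightarrow> sol_q po = q"
  unfolding sol_q_def
  by (rule theI2[of _ "(q, p)"]) (auto dest: is_solution_unique)

section \<open>A square root of the potential\<close>

(* 1 - w^4 = (1 - w) * rg w, so g x = x^2 * rg (1 - x^2) on [-1, 1]: G is a signed square root of g. *)
definition rg :: "real \<Rightarrow> real" where
  "rg w = 1 + w + w\<^sup>2 + w ^ 3"

definition G :: "real \<Rightarrow> real" where
  "G x = x * sqrt (rg (1 - x\<^sup>2))"

lemma rg_ge_1:
  assumes "\<bar>x\<bar> \<le> 1"
  shows "1 \<le> rg (1 - x\<^sup>2)"
proof -
  have geom: "1 \<le> 1 + w + w\<^sup>2 + w ^ 3" if "0 \<le> w" for w :: real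
    using that by simp
  have "0 \<le> 1 - x\<^sup>2"
    using assms by (simp add: abs_square_le_1)
  then show ?thesis
    unfolding rg_def by (rule geom)
qed

lemma continuous_on_rg [continuous_intros]:
  "continuous_on A f \<Longrightarrow> continuous_on A (\<lambda>x. rg (f x))"
  unfolding rg_def by (intro continuous_intros)

lemma G_squared: "\<bar>x\<bar> \<le> 1 \<Longrightarrow> (G x)\<^sup>2 = g x"
proof -
  assume "\<bar>x\<bar> \<le> 1"
  then have "0 \<le> 1 - x\<^sup>2"
    by (simp add: abs_square_le_1)
  with \<open>\<bar>x\<bar> \<le> 1\<close> show ?thesis
    by (simp add: G_def g_def rg_def power_mult_distrib) (simp add: algebra_simps power2_eq_square power3_eq_cube power4_eq_xxxx)
qed

lemma G_minus: "G (- x) = - G x"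
  by (simp add: G_def)

lemma G_1: "G 1 = 1" and G_minus_1: "G (-1) = -1"
  by (simp_all add: G_def rg_def)

definition dG :: "real \<Rightarrow> real" where
  "dG x = 4 * (1 - x\<^sup>2) ^ 3 / sqrt (rg (1 - x\<^sup>2))"

lemma DERIV_G:
  assumes "\<bar>x\<bar> \<le> 1"
  shows "(G has_real_derivative dG x) (at x)"
proof -
  define w where "w = 1 - x\<^sup>2"
  have "1 \<le> rg w"
    using assms by (simp add: w_def rg_ge_1)
  then have R: "0 < rg w" "0 < sqrt (rg w)" "sqrt (rg w) * sqrt (rg w) = rg w"
    by simp_all
  have "((\<lambda>x. rg (1 - x\<^sup>2)) has_real_derivative (1 + 2 * w + 3 * w\<^sup>2) * (- 2 * x)) (at x)"
    unfolding rg_def w_def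
    by (rule derivative_eq_intros refl)+ (simp add: power2_eq_square power3_eq_cube algebra_simps)
  from DERIV_mult[OF DERIV_ident DERIV_chain2[OF DERIV_real_sqrt[OF R(1)[unfolded w_def]] this]]
  have "(G has_real_derivative
      sqrt (rg w) + x * (inverse (sqrt (rg w)) / 2 * ((1 + 2 * w + 3 * w\<^sup>2) * (- 2 * x)))) (at x)"
    unfolding G_def[abs_def] w_def by (simp add: ac_simps)
  moreover have "sqrt (rg w) + x * (inverse (sqrt (rg w)) / 2 * ((1 + 2 * w + 3 * w\<^sup>2) * (- 2 * x)))
      = (rg w - x\<^sup>2 * (1 + 2 * w + 3 * w\<^sup>2)) / sqrt (rg w)"
    using R by (simp add: field_simps power2_eq_square)
  moreover have "rg w - x\<^sup>2 * (1 + 2 * w + 3 * w\<^sup>2) = 4 * w ^ 3"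
    by (simp add: rg_def w_def power2_eq_square power3_eq_cube algebra_simps)
  ultimately show ?thesis
    by (simp add: dG_def w_def)
qed

lemma dG_pos:
  assumes "\<bar>x\<bar> < 1"
  shows "0 < dG x"
proof -
  have "0 < 1 - x\<^sup>2"
    using assms by (simp add: abs_square_less_1)
  with rg_ge_1[of x] assms show ?thesis
    by (simp add: dG_def)
qed

lemma continuous_G: "continuous_on A G"
  unfolding G_def by (intro continuous_intros)

lemma strict_mono_on_G: "strict_mono_on {-1..1} G"
proof (rule strict_mono_onI)
  fix x y :: real
  assume "x \<in> {-1..1}" "y \<in> {-1..1}" "x < y"
  then show "G x < G y"
    by (intro DERIV_pos_imp_increasing_open[OF \<open>x < y\<close>] continuous_G)
       (auto intro!: exI DERIV_G dG_pos)
qed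

lemma inj_on_G: "inj_on G {-1..1}"
  using strict_mono_on_G by (rule strict_mono_on_imp_inj_on)

lemma G_image: "G ` {-1..1} = {-1..1}"
proof
  show "G ` {-1..1} \<subseteq> {-1..1}"
  proof
    fix y assume "y \<in> G ` {-1..1}"
    then obtain x where "x \<in> {-1..1}" "y = G x" by blast
    then show "y \<in> {-1..1}"
      using strict_mono_on_leD[OF strict_mono_on_G, of "-1" x] strict_mono_on_leD[OF strict_mono_on_G, of x 1]
      by (simp add: G_1 G_minus_1)
  qed
  show "{-1..1} \<subseteq> G ` {-1..1}"
    using IVT'[of G "-1" _ 1] G_1 G_minus_1 continuous_G by force
qed

definition H :: "real \<Rightarrow> real" where
  "H = the_inv_into {-1..1} G"

lemma H_G: "\<bar>x\<bar> \<le> 1 \<Longrightarrow> H (G x) = x"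
  unfolding H_def using inj_on_G by (rule the_inv_into_f_f) auto

lemma G_H: "\<bar>s\<bar> \<le> 1 \<Longrightarrow> G (H s) = s"
  unfolding H_def using inj_on_G by (rule f_the_inv_into_f) (auto simp: G_image)

lemma H_in: "\<bar>s\<bar> \<le> 1 \<Longrightarrow> H s \<in> {-1..1}"
  unfolding H_def using inj_on_G by (rule the_inv_into_into) (auto simp: G_image)

lemma H_minus: "\<bar>s\<bar> \<le> 1 \<Longrightarrow> H (- s) = - H s"
  by (metis G_H G_minus H_G H_in abs_minus_cancel abs_le_iff atLeastAtMost_iff minus_le_iff)

lemma H_0: "H 0 = 0"
  using H_G[of 0] by (simp add: G_def)

lemma abs_H_less_1:
  assumes "\<bar>s\<bar> < 1"
  shows "\<bar>H s\<bar> < 1"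
proof -
  have "G (H s) = s" "H s \<in> {-1..1}"
    using G_H[of s] H_in[of s] assms by auto
  then have "H s \<in> {-1..1}" "H s \<noteq> 1" "H s \<noteq> -1"
    using G_1 G_minus_1 assms by auto
  then show ?thesis
    by auto
qed

lemma H_nonneg: "0 \<le> s \<Longrightarrow> s \<le> 1 \<Longrightarrow> 0 \<le> H s"
  using strict_mono_on_less_eq[OF strict_mono_on_G, of 0 "H s"] G_H[of s] H_in[of s]
  by (simp add: G_def)

lemma continuous_on_H: "continuous_on {-1..1} H"
  using continuous_on_inv_into[OF continuous_G _ inj_on_G] by (simp add: H_def G_image)

definition kappa :: "real \<Rightarrow> real" where
  "kappa s = 1 / dG (H s)"

lemma DERIV_H:
  assumes "\<bar>s\<bar> < 1"
  shows "(H has_real_derivative kappa s) (at s)"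
proof -
  have "G (H s) = s"
    using assms by (simp add: G_H)
  moreover have "\<bar>H s\<bar> < 1"
    using assms by (rule abs_H_less_1)
  ultimately show ?thesis
    using has_field_derivative_inverse_strong[OF DERIV_G dG_pos[THEN less_imp_neq, symmetric],
        of "H s" "{-1<..<1}" H]
    by (auto simp: kappa_def H_G continuous_G divide_inverse abs_less_iff abs_le_iff)
qed

lemma inverse_dG:
  assumes "\<bar>x\<bar> < 1"
  shows "1 / dG x = sqrt (rg (1 - x\<^sup>2) / (1 - x\<^sup>2) ^ 6) / 4"
proof -
  have "0 < 1 - x\<^sup>2"
    using assms by (simp add: abs_square_less_1)
  moreover have "sqrt (w ^ 6) = w ^ 3" if "0 < w" for w :: real
    using that by (simp add: real_sqrt_unique flip: power_mult)
  ultimately show ?thesis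
    by (simp add: dG_def real_sqrt_divide)
qed

lemma rg_div_pow6_strict_antimono:
  assumes "0 < v" "v < w"
  shows "rg w / w ^ 6 < rg v / v ^ 6"
proof -
  have expand: "rg u / u ^ 6 = inverse u ^ 6 + inverse u ^ 5 + inverse u ^ 4 + inverse u ^ 3"
    if "0 < u" for u :: real
    using that by (simp add: rg_def field_simps) (simp add: eval_nat_numeral)
  have "inverse w ^ n < inverse v ^ n" if "0 < n" for n
    using assms that by (intro power_strict_mono) (auto simp: less_imp_inverse_less)
  then show ?thesis
    using assms by (simp add: expand add_strict_mono)
qed

lemma inverse_dG_strict_mono:
  assumes "0 \<le> x" "x < y" "y < 1"
  shows "1 / dG x < 1 / dG y"
proof -
  have "0 < 1 - y\<^sup>2" "1 - y\<^sup>2 < 1 - x\<^sup>2"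
    using assms by (auto simp: abs_square_less_1 power_strict_mono)
  then show ?thesis
    using assms by (simp add: inverse_dG rg_div_pow6_strict_antimono)
qed

lemma kappa_0: "kappa 0 = 1 / 2"
  by (simp add: kappa_def H_0 dG_def rg_def)

lemma kappa_pos: "\<bar>s\<bar> < 1 \<Longrightarrow> 0 < kappa s"
  by (simp add: kappa_def abs_H_less_1 dG_pos)

lemma kappa_abs: "\<bar>s\<bar> \<le> 1 \<Longrightarrow> kappa \<bar>s\<bar> = kappa s"
  by (cases "0 \<le> s") (auto simp: kappa_def H_minus dG_def)

lemma kappa_strict_mono:
  assumes "\<bar>s\<bar> < \<bar>t\<bar>" "\<bar>t\<bar> < 1"
  shows "kappa s < kappa t"
proof -
  have "G (H \<bar>s\<bar>) < G (H \<bar>t\<bar>)"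
    using assms by (simp add: G_H)
  then have "H \<bar>s\<bar> < H \<bar>t\<bar>"
    using strict_mono_on_less[OF strict_mono_on_G] H_in assms by simp
  moreover have "0 \<le> H \<bar>s\<bar>" "H \<bar>t\<bar> < 1"
    using assms H_nonneg abs_H_less_1[of "\<bar>t\<bar>"] by auto
  ultimately have "kappa \<bar>s\<bar> < kappa \<bar>t\<bar>"
    unfolding kappa_def by (intro inverse_dG_strict_mono)
  then show ?thesis
    using assms by (simp add: kappa_abs)
qed

lemma kappa_mono: "\<bar>s\<bar> \<le> \<bar>t\<bar> \<Longrightarrow> \<bar>t\<bar> < 1 \<Longrightarrow> kappa s \<le> kappa t"
  by (metis kappa_abs kappa_strict_mono le_less less_imp_le)

lemma continuous_on_kappa: "continuous_on {-1<..<1} kappa"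
proof -
  have "sqrt (rg (1 - x\<^sup>2)) \<noteq> 0" "dG x \<noteq> 0" if "x \<in> {-1<..<1}" for x
    using rg_ge_1[of x] dG_pos[of x] that by (auto simp: abs_le_iff abs_less_iff)
  then have "continuous_on {-1<..<1} (\<lambda>x. 1 / dG x)"
    unfolding dG_def by (intro continuous_intros) auto
  moreover have "continuous_on {-1<..<1} H"
    using continuous_on_H by (rule continuous_on_subset) auto
  moreover have "H ` {-1<..<1} \<subseteq> {-1<..<1}"
    using abs_H_less_1 by (auto simp: abs_less_iff)
  ultimately show ?thesis
    unfolding kappa_def by (rule continuous_on_compose2)
qed

lemma dg_H:
  assumes "\<bar>s\<bar> < 1"
  shows "dg (H s) = 2 * s / kappa s"
proof -
  define x where "x = H s"
  have x: "\<bar>x\<bar> < 1" "G x = s"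
    using assms by (simp_all add: x_def abs_H_less_1 G_H)
  have "0 < sqrt (rg (1 - x\<^sup>2))"
    using rg_ge_1[of x] x by simp
  have "2 * s / kappa s = 2 * G x * dG x"
    using x by (simp add: kappa_def x_def)
  also have "\<dots> = dg x"
    using x(1) \<open>0 < sqrt (rg (1 - x\<^sup>2))\<close> by (simp add: G_def dG_def dg_def)
  finally show ?thesis
    by (simp add: x_def)
qed

lemma kappa_blowup:
  assumes "\<bar>s\<bar> < 1"
  shows "1 \<le> (4 * kappa s) ^ 4 * (2 * (1 - s)) ^ 3"
proof -
  define x where "x = H s"
  define w where "w = 1 - x\<^sup>2"
  have x: "\<bar>x\<bar> < 1" "G x = s"
    using assms by (simp_all add: x_def abs_H_less_1 G_H)
  then have w: "0 < w" "w \<le> 1"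
    by (auto simp: w_def abs_square_less_1)
  have "1 / w ^ 3 \<le> sqrt (rg w) / w ^ 3"
    using w rg_ge_1[of x] x by (simp add: w_def divide_right_mono)
  also have "\<dots> = 4 * kappa s"
    using w by (simp add: kappa_def dG_def w_def flip: x_def)
  finally have kappa_ge: "1 / w ^ 3 \<le> 4 * kappa s" .
  have "w ^ 4 = 1 - s\<^sup>2"
    using x G_squared[of x] by (simp add: g_def w_def)
  also have "\<dots> = 2 * (1 - s) - (1 - s)\<^sup>2"
    by (simp add: power2_eq_square algebra_simps)
  also have "\<dots> \<le> 2 * (1 - s)"
    by simp
  finally have "(w ^ 4) ^ 3 \<le> (2 * (1 - s)) ^ 3"
    using w by (intro power_mono) auto
  moreover have "(1 / w ^ 3) ^ 4 \<le> (4 * kappa s) ^ 4"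
    using kappa_ge w by (intro power_mono) auto
  ultimately have "(1 / w ^ 3) ^ 4 * (w ^ 4) ^ 3 \<le> (4 * kappa s) ^ 4 * (2 * (1 - s)) ^ 3"
    using w by (intro mult_mono) auto
  then show ?thesis
    using w by (simp add: power_divide flip: power_mult)
qed

section \<open>Angle variables\<close>

(* Along the motion the angle theta advances at rate 1 / dt_dangle e theta, so angle_time e theta is
   the time at which it reaches theta. *)
definition dt_dangle :: "real \<Rightarrow> real \<Rightarrow> real" where
  "dt_dangle e \<theta> = kappa (e * sin \<theta>) / sqrt 2"

definition angle_time :: "real \<Rightarrow> real \<Rightarrow> real" where
  "angle_time e = (SOME F. F 0 = 0 \<and> (\<forall>\<theta>. (F has_real_derivative dt_dangle e \<theta>) (at \<theta>)))"

definition angle :: "real \<Rightarrow> real \<Rightarrow> real" where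
  "angle e = inv (angle_time e)"

definition period :: "real \<Rightarrow> real" where
  "period e = integral {0..2 * pi} (dt_dangle e)"

lemma abs_mult_sin_less_1: "\<bar>e\<bar> < 1 \<Longrightarrow> \<bar>e * sin \<theta>\<bar> < (1::real)"
  by (metis abs_mult abs_sin_le_one dual_order.strict_trans2 mult_left_le abs_ge_zero)

lemma continuous_on_dt_dangle: "continuous_on ({-1<..<1} \<times> UNIV) (\<lambda>(e, \<theta>). dt_dangle e \<theta>)"
proof -
  have "continuous_on ({-1<..<1} \<times> UNIV) (\<lambda>x. kappa (fst x * sin (snd x)))"
  proof (rule continuous_on_compose2[OF continuous_on_kappa])
    show "(\<lambda>x. fst x * sin (snd x)) ` ({-1<..<1} \<times> UNIV) \<subseteq> {-1<..<1::real}"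
    proof (rule image_subsetI)
      fix x :: "real \<times> real"
      assume "x \<in> {-1<..<1} \<times> UNIV"
      then show "fst x * sin (snd x) \<in> {-1<..<1}"
        using abs_mult_sin_less_1[of "fst x" "snd x"] by (auto simp: abs_less_iff)
    qed
  qed (intro continuous_intros)
  then show ?thesis
    unfolding dt_dangle_def case_prod_unfold by (intro continuous_intros) auto
qed

lemma isCont_dt_dangle:
  assumes "\<bar>e\<bar> < 1"
  shows "isCont (dt_dangle e) \<theta>"
proof -
  have "continuous_on UNIV (\<lambda>\<theta>. (\<lambda>(e, \<theta>). dt_dangle e \<theta>) (e, \<theta>))"
    using assms by (intro continuous_on_compose2[OF continuous_on_dt_dangle] continuous_intros) auto
  then show ?thesis
    by (simp add: continuous_on_eq_continuous_at)
qed

lemma dt_dangle_ge: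
  assumes "\<bar>e\<bar> < 1"
  shows "1 / (2 * sqrt 2) \<le> dt_dangle e \<theta>"
proof -
  have "1 / 2 \<le> kappa (e * sin \<theta>)"
    using kappa_mono[of 0 "e * sin \<theta>"] abs_mult_sin_less_1[OF assms] by (simp add: kappa_0)
  then have "(1 / 2) / sqrt 2 \<le> kappa (e * sin \<theta>) / sqrt 2"
    by (rule divide_right_mono) simp
  then show ?thesis
    by (simp add: dt_dangle_def)
qed

lemma dt_dangle_pos: "\<bar>e\<bar> < 1 \<Longrightarrow> 0 < dt_dangle e \<theta>"
  using dt_dangle_ge[of e \<theta>] by (smt (verit) divide_pos_pos real_sqrt_gt_zero)

lemma integrable_dt_dangle: "\<bar>e\<bar> < 1 \<Longrightarrow> dt_dangle e integrable_on {a..b}"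
  using isCont_dt_dangle by (intro integrable_continuous_interval continuous_at_imp_continuous_on) blast

lemma
  assumes "\<bar>e\<bar> < 1"
  shows angle_time_0: "angle_time e 0 = 0"
    and DERIV_angle_time: "(angle_time e has_real_derivative dt_dangle e \<theta>) (at \<theta>)"
  using someI_ex[OF exists_antiderivative[OF isCont_dt_dangle[OF assms]]]
  unfolding angle_time_def[symmetric] by auto

lemma bij_angle_time:
  assumes "\<bar>e\<bar> < 1"
  shows "bij (angle_time e)"
proof (rule bijI)
  have "0 < 1 / (2 * sqrt (2::real))"
    by simp
  with DERIV_angle_time[OF assms] dt_dangle_ge[OF assms] show "surj (angle_time e)"
    by (rule surj_if_DERIV_ge_pos)
  show "inj (angle_time e)"
    using strict_mono_if_DERIV_pos[OF DERIV_angle_time[OF assms] dt_dangle_pos[OF assms]]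
    by (rule strict_mono_imp_inj_on)
qed

lemma
  assumes "\<bar>e\<bar> < 1"
  shows angle_angle_time: "angle e (angle_time e \<theta>) = \<theta>"
    and angle_time_angle: "angle_time e (angle e t) = t"
  using bij_angle_time[OF assms]
  by (simp_all add: angle_def inv_f_f surj_f_inv_f bij_is_inj bij_is_surj)

lemma strict_mono_angle:
  assumes "\<bar>e\<bar> < 1"
  shows "strict_mono (angle e)"
  using strict_mono_if_DERIV_pos[OF DERIV_angle_time[OF assms] dt_dangle_pos[OF assms]]
    bij_is_surj[OF bij_angle_time[OF assms]] angle_angle_time[OF assms]
  by (rule strict_mono_inv)

lemma DERIV_angle:
  assumes "\<bar>e\<bar> < 1"
  shows "(angle e has_real_derivative 1 / dt_dangle e (angle e t)) (at t)"
proof -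
  have "continuous_on UNIV (angle_time e)"
    using DERIV_angle_time[OF assms] by (meson DERIV_isCont continuous_at_imp_continuous_on)
  moreover have "dt_dangle e (angle e t) \<noteq> 0"
    using dt_dangle_pos[OF assms] by (metis less_irrefl)
  ultimately have "(angle e has_real_derivative inverse (dt_dangle e (angle e t)))
      (at (angle_time e (angle e t)))"
    using has_field_derivative_inverse_strong[OF DERIV_angle_time[OF assms] _ open_UNIV UNIV_I]
      angle_angle_time[OF assms] by blast
  then show ?thesis
    by (simp add: angle_time_angle[OF assms] divide_inverse)
qed

lemma angle_time_2pi:
  assumes "\<bar>e\<bar> < 1"
  shows "angle_time e (2 * pi) = period e"
proof -
  have "(angle_time e has_vector_derivative dt_dangle e x) (at x within {0..2 * pi})" for x
    using DERIV_angle_time[OF assms, of x]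
    by (simp add: has_real_derivative_iff_has_vector_derivative[symmetric] has_field_derivative_at_within)
  then have "(dt_dangle e has_integral angle_time e (2 * pi) - angle_time e 0) {0..2 * pi}"
    by (intro fundamental_theorem_of_calculus) simp_all
  then show ?thesis
    by (simp add: period_def integral_unique angle_time_0[OF assms])
qed

lemma angle_shift:
  assumes "\<bar>e\<bar> < 1"
  shows "angle e (t + period e) = angle e t + 2 * pi"
proof -
  have "angle_time e (angle e t + 2 * pi) = t + period e"
    using antiderivative_periodic_shift[OF DERIV_angle_time[OF assms], of "2 * pi" "angle e t"]
    by (simp add: dt_dangle_def assms angle_time_angle angle_time_0 angle_time_2pi)
  then have "angle e (angle_time e (angle e t + 2 * pi)) = angle e (t + period e)"
    by simp
  then show ?thesis
    by (simp add: angle_angle_time[OF assms])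
qed

lemma angle_0: "\<bar>e\<bar> < 1 \<Longrightarrow> angle e 0 = 0"
  using angle_angle_time[of e 0] by (simp add: angle_time_0)

lemma is_solution_angle:
  assumes "\<bar>e\<bar> < 1"
  shows "is_solution (sqrt 2 * e) (\<lambda>t. H (e * sin (angle e t))) (\<lambda>t. sqrt 2 * e * cos (angle e t))"
  unfolding is_solution_def deriv_g
proof (intro conjI allI)
  fix t
  let ?\<theta> = "angle e t"
  let ?s = "e * sin ?\<theta>"
  have s: "\<bar>?s\<bar> < 1"
    using assms by (rule abs_mult_sin_less_1)
  have "0 < kappa ?s"
    using s by (rule kappa_pos)
  have d\<theta>: "(angle e has_real_derivative sqrt 2 / kappa ?s) (at t)"
    using DERIV_angle[OF assms, of t] by (simp add: dt_dangle_def)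
  have "((\<lambda>t. H (e * sin (angle e t))) has_real_derivative
      kappa ?s * (e * (cos ?\<theta> * (sqrt 2 / kappa ?s)))) (at t)"
    by (rule DERIV_chain2[where f = H and g = "\<lambda>t. e * sin (angle e t)", OF DERIV_H[OF s]])
       (auto intro!: derivative_eq_intros d\<theta>)
  then show "((\<lambda>t. H (e * sin (angle e t))) has_real_derivative sqrt 2 * e * cos ?\<theta>) (at t)"
    using \<open>0 < kappa ?s\<close> by (simp add: ac_simps)
  have "((\<lambda>t. sqrt 2 * e * cos (angle e t)) has_real_derivative
      sqrt 2 * e * (- sin ?\<theta> * (sqrt 2 / kappa ?s))) (at t)"
    by (auto intro!: derivative_eq_intros d\<theta>)
  moreover have "sqrt 2 * e * (- sin ?\<theta> * (sqrt 2 / kappa ?s)) = - (sqrt 2 * sqrt 2 * ?s / kappa ?s)"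
    by (simp add: algebra_simps)
  also have "\<dots> = - dg (H ?s)"
    by (simp add: dg_H[OF s])
  ultimately show "((\<lambda>t. sqrt 2 * e * cos (angle e t)) has_real_derivative - dg (H ?s)) (at t)"
    by (rule DERIV_cong)
qed (simp_all add: assms angle_0 H_0)

lemma sol_q_eq: "\<bar>e\<bar> < 1 \<Longrightarrow> sol_q (sqrt 2 * e) = (\<lambda>t. H (e * sin (angle e t)))"
  using is_solution_angle by (rule sol_q_eqI)

lemma period_ge:
  assumes "\<bar>e\<bar> < 1"
  shows "pi / sqrt 2 \<le> period e"
proof -
  have "integral {0..2 * pi} (\<lambda>_. 1 / (2 * sqrt 2)) \<le> period e"
    unfolding period_def using dt_dangle_ge[OF assms] integrable_dt_dangle[OF assms]
    by (intro integral_le) auto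
  then show ?thesis
    by (simp add: field_simps)
qed

(* q attains its maximum H e only where sin (angle e t) = 1, i.e. once per turn of the angle. *)
lemma min_period_angle:
  assumes "0 < e" "e < 1"
  shows "min_period (\<lambda>t. H (e * sin (angle e t))) = period e"
proof -
  have e: "\<bar>e\<bar> < 1"
    using assms by simp
  let ?q = "\<lambda>t. H (e * sin (angle e t))"
  have "period e \<in> {T. 0 < T \<and> (\<forall>t. ?q (t + T) = ?q t)}"
    using period_ge[OF e] angle_shift[OF e] by (auto intro: less_le_trans[rotated])
  moreover have "period e \<le> S" if "S \<in> {T. 0 < T \<and> (\<forall>t. ?q (t + T) = ?q t)}" for S
  proof (rule ccontr)
    assume "\<not> period e \<le> S"
    define t0 where "t0 = angle_time e (pi / 2)"
    have "angle e t0 = pi / 2" "angle e (t0 + period e) = pi / 2 + 2 * pi"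
      by (simp_all add: t0_def angle_angle_time angle_shift e)
    moreover have "angle e t0 < angle e (t0 + S)" "angle e (t0 + S) < angle e (t0 + period e)"
      using strict_mono_angle[OF e] that \<open>\<not> period e \<le> S\<close> by (simp_all add: strict_mono_less)
    ultimately have "sin (angle e (t0 + S)) < 1"
      by (intro sin_less_1) simp_all
    then have "e * sin (angle e (t0 + S)) < e"
      using assms by simp
    moreover have "H (e * sin (angle e (t0 + S))) = H (e * sin (angle e t0))"
      using that by simp
    then have "G (H (e * sin (angle e (t0 + S)))) = G (H e)"
      unfolding \<open>angle e t0 = pi / 2\<close> by simp
    then have "e * sin (angle e (t0 + S)) = e"
      using abs_mult_sin_less_1[OF e] e by (simp add: G_H less_imp_le)
    ultimately show False
      by simp
  qed
  ultimately show ?thesis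
    unfolding min_period_def by (rule cInf_eq_minimum)
qed

lemma period_T_eq:
  assumes "0 < po" "po < sqrt 2"
  shows "period_T po = period (po / sqrt 2)"
proof -
  define e where "e = po / sqrt 2"
  have "0 < e" "e < 1" "po = sqrt 2 * e"
    using assms by (simp_all add: e_def field_simps)
  then show ?thesis
    by (simp add: period_T_def sol_q_eq min_period_angle flip: e_def)
qed

section \<open>The period function\<close>

lemma period_0: "period 0 = pi / sqrt 2"
proof -
  have "dt_dangle 0 = (\<lambda>_. 1 / (2 * sqrt 2))"
    by (simp add: fun_eq_iff dt_dangle_def kappa_0)
  then show ?thesis
    by (simp add: period_def field_simps)
qed

lemma continuous_on_period: "continuous_on {-1<..<1} period"
proof -
  have "continuous_on ({-1<..<1} \<times> cbox 0 (2 * pi)) (\<lambda>(e, \<theta>). dt_dangle e \<theta>)"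
    using continuous_on_dt_dangle by (rule continuous_on_subset) auto
  from integral_continuous_on_param[OF this] show ?thesis
    by (simp add: period_def cbox_interval)
qed

lemma period_strict_mono:
  assumes "0 \<le> e1" "e1 < e2" "e2 < 1"
  shows "period e1 < period e2"
proof -
  have e: "\<bar>e1\<bar> < 1" "\<bar>e2\<bar> < 1"
    using assms by auto
  have less: "dt_dangle e1 \<theta> < dt_dangle e2 \<theta>" if "sin \<theta> \<noteq> 0" for \<theta>
  proof -
    have "\<bar>e1 * sin \<theta>\<bar> < \<bar>e2 * sin \<theta>\<bar>"
      using assms that by (simp add: abs_mult mult_strict_right_mono)
    then have "kappa (e1 * sin \<theta>) < kappa (e2 * sin \<theta>)"
      using abs_mult_sin_less_1[OF e(2)] by (rule kappa_strict_mono)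
    then show ?thesis
      by (simp add: dt_dangle_def divide_strict_right_mono)
  qed
  have cont: "continuous_on {a..b} (dt_dangle e)" if "\<bar>e\<bar> < 1" for e a b
    using isCont_dt_dangle[OF that] by (intro continuous_at_imp_continuous_on) blast
  have "integral {0..pi} (dt_dangle e1) < integral {0..pi} (dt_dangle e2)"
  proof (rule integral_less_real[OF cont[OF e(1)] cont[OF e(2)]])
    show "{0<..<pi} \<noteq> {}"
      by (simp add: not_le)
    show "dt_dangle e1 x < dt_dangle e2 x" if "x \<in> {0<..<pi}" for x
      using that sin_gt_zero[of x] by (intro less) auto
  qed
  moreover have "integral {pi..2 * pi} (dt_dangle e1) < integral {pi..2 * pi} (dt_dangle e2)"
  proof (rule integral_less_real[OF cont[OF e(1)] cont[OF e(2)]])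
    show "{pi<..<2 * pi} \<noteq> {}"
      by (simp add: not_le)
    show "dt_dangle e1 x < dt_dangle e2 x" if "x \<in> {pi<..<2 * pi}" for x
      using that sin_lt_zero[of x] by (intro less) auto
  qed
  moreover have "period e = integral {0..pi} (dt_dangle e) + integral {pi..2 * pi} (dt_dangle e)"
    if "\<bar>e\<bar> < 1" for e
    unfolding period_def
    by (rule Henstock_Kurzweil_Integration.integral_combine[symmetric]) (simp_all add: integrable_dt_dangle that)
  ultimately show ?thesis
    using e by simp
qed

(* On the window |theta - pi / 2| <= sigma, of length 2 * sigma, the integrand is at least
   kappa (e * cos sigma) / sqrt 2. *)
lemma period_ge_window:
  assumes "0 \<le> e" "e < 1"
  defines "\<sigma> \<equiv> sqrt (1 - e)"
  shows "sqrt 2 * \<sigma> * kappa (e * cos \<sigma>) \<le> period e"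
proof -
  have \<sigma>: "0 < \<sigma>" "\<sigma> \<le> 1"
    using assms by (simp_all add: \<sigma>_def)
  let ?W = "{pi / 2 - \<sigma>..pi / 2 + \<sigma>}"
  have "kappa (e * cos \<sigma>) / sqrt 2 \<le> dt_dangle e \<theta>" if "\<theta> \<in> ?W" for \<theta>
  proof -
    have "cos \<sigma> \<le> cos \<bar>\<theta> - pi / 2\<bar>"
      using that \<sigma> pi_gt3 by (intro cos_monotone_0_pi_le) auto
    also have "\<dots> = sin \<theta>"
      by (simp add: cos_diff)
    moreover have "0 \<le> cos \<sigma>"
      using \<sigma> pi_gt3 by (intro cos_ge_zero) auto
    ultimately have "\<bar>e * cos \<sigma>\<bar> \<le> \<bar>e * sin \<theta>\<bar>"
      by (simp add: abs_mult mult_left_mono)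
    then have "kappa (e * cos \<sigma>) \<le> kappa (e * sin \<theta>)"
      using abs_mult_sin_less_1 assms(1,2) by (intro kappa_mono) auto
    then show ?thesis
      by (simp add: dt_dangle_def divide_right_mono)
  qed
  then have "integral ?W (\<lambda>_. kappa (e * cos \<sigma>) / sqrt 2) \<le> integral ?W (dt_dangle e)"
    using assms(1,2) by (intro integral_le integrable_dt_dangle) auto
  also have "\<dots> \<le> period e"
    unfolding period_def using assms(1,2) \<sigma> pi_gt3 dt_dangle_pos
    by (intro integral_subset_le integrable_dt_dangle) (auto simp: less_imp_le)
  finally have "2 / sqrt 2 * \<sigma> * kappa (e * cos \<sigma>) \<le> period e"
    using \<sigma> by simp
  moreover have "2 / sqrt 2 = sqrt (2::real)"
    by (rule real_div_sqrt) simp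
  ultimately show ?thesis
    by simp
qed

lemma one_minus_mult_cos_le:
  assumes "0 \<le> e" "e \<le> 1"
  shows "2 * (1 - e * cos (sqrt (1 - e))) \<le> 3 * (1 - e)"
proof -
  have "e * (1 - (1 - e) / 2) \<le> e * cos (sqrt (1 - e))"
    using cos_ge_1_minus_sq[of "sqrt (1 - e)"] assms by (intro mult_left_mono) auto
  moreover have "e * (1 - e) \<le> 1 - e"
    using assms by (simp add: mult_left_le_one_le)
  ultimately show ?thesis
    by (simp add: field_simps)
qed

lemma period_blowup:
  assumes "0 \<le> e" "e < 1"
  shows "1 \<le> 1728 * (1 - e) * period e ^ 4"
proof -
  define \<sigma> where "\<sigma> = sqrt (1 - e)"
  define m where "m = kappa (e * cos \<sigma>)"
  have \<sigma>: "0 < \<sigma>" "\<sigma>\<^sup>2 = 1 - e"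
    using assms by (simp_all add: \<sigma>_def)
  have "\<bar>e * cos \<sigma>\<bar> \<le> e"
    using assms abs_cos_le_one[of \<sigma>] by (simp add: abs_mult mult_left_le)
  then have cos_bound: "\<bar>e * cos \<sigma>\<bar> < 1"
    using assms by simp
  have window: "sqrt 2 * \<sigma> * m \<le> period e" "0 \<le> sqrt 2 * \<sigma> * m"
    using period_ge_window[OF assms] \<sigma> kappa_pos[OF cos_bound] by (simp_all add: \<sigma>_def m_def)
  have "2 * (1 - e * cos \<sigma>) \<le> 3 * \<sigma>\<^sup>2"
    unfolding \<sigma>(2) using one_minus_mult_cos_le[OF assms(1) less_imp_le[OF assms(2)]] by (simp add: \<sigma>_def)
  moreover have "0 \<le> 2 * (1 - e * cos \<sigma>)"
    using cos_bound by simp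
  ultimately have "(2 * (1 - e * cos \<sigma>)) ^ 3 \<le> (3 * \<sigma>\<^sup>2) ^ 3"
    by (rule power_mono)
  have "1 \<le> (4 * m) ^ 4 * (2 * (1 - e * cos \<sigma>)) ^ 3"
    unfolding m_def using cos_bound by (rule kappa_blowup)
  also have "\<dots> \<le> (4 * m) ^ 4 * (3 * \<sigma>\<^sup>2) ^ 3"
    using \<open>(2 * (1 - e * cos \<sigma>)) ^ 3 \<le> (3 * \<sigma>\<^sup>2) ^ 3\<close> by (rule mult_left_mono) simp
  also have "\<dots> = 1728 * \<sigma>\<^sup>2 * (sqrt 2 * \<sigma> * m) ^ 4"
  proof -
    have "sqrt 2 ^ 4 = (4::real)"
      using power_mult[of "sqrt 2" 2 2] by simp
    then show ?thesis
      by (simp add: power_mult_distrib eval_nat_numeral)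
  qed
  also have "\<dots> \<le> 1728 * \<sigma>\<^sup>2 * period e ^ 4"
    using power_mono[OF window] by (rule mult_left_mono) simp
  finally show ?thesis
    by (simp add: \<sigma>(2))
qed

lemma continuous_on_period_T: "continuous_on {0<..<sqrt 2} period_T"
proof -
  have "continuous_on {0<..<sqrt 2} (\<lambda>po. period (po / sqrt 2))"
    by (rule continuous_on_compose2[OF continuous_on_period])
       (auto intro: continuous_on_divide continuous_on_id simp: field_simps)
  then show ?thesis
    by (rule continuous_on_eq) (simp add: period_T_eq)
qed

lemma strict_mono_on_period_T: "strict_mono_on {0<..<sqrt 2} period_T"
proof (rule strict_mono_onI)
  fix r s assume "r \<in> {0<..<sqrt 2}" "s \<in> {0<..<sqrt 2}" "r < s"
  then show "period_T r < period_T s"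
    by (simp add: period_T_eq period_strict_mono divide_strict_right_mono field_simps)
qed

lemma INF_period_T: "(INF po\<in>{0<..<sqrt 2}. period_T po) = pi / sqrt 2"
proof (rule antisym)
  have lower: "pi / sqrt 2 \<le> period_T po" if "po \<in> {0<..<sqrt 2}" for po
    using that period_ge[of "po / sqrt 2"] by (simp add: period_T_eq field_simps)
  then show "pi / sqrt 2 \<le> (INF po\<in>{0<..<sqrt 2}. period_T po)"
    by (intro cINF_greatest) auto
  have "isCont period 0"
    using continuous_on_period by (rule continuous_on_interior) (simp add: interior_open)
  then have "(period \<longlongrightarrow> pi / sqrt 2) (at 0)"
    by (simp add: isCont_def period_0)
  then have "(period \<longlongrightarrow> pi / sqrt 2) (at_right 0)"
    by (simp add: filterlim_at_split)
  moreover have "\<forall>\<^sub>F e in at_right 0. (INF po\<in>{0<..<sqrt 2}. period_T po) \<le> period e"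
    unfolding eventually_at_right_field
  proof (intro exI[of _ 1] conjI allI impI)
    fix e :: real assume "0 < e" "e < 1"
    then have "sqrt 2 * e \<in> {0<..<sqrt 2}"
      by simp
    then have "(INF po\<in>{0<..<sqrt 2}. period_T po) \<le> period_T (sqrt 2 * e)"
      using lower by (intro cINF_lower bdd_belowI2) auto
    then show "(INF po\<in>{0<..<sqrt 2}. period_T po) \<le> period e"
      using \<open>sqrt 2 * e \<in> {0<..<sqrt 2}\<close> by (simp add: period_T_eq)
  qed simp
  ultimately show "(INF po\<in>{0<..<sqrt 2}. period_T po) \<le> pi / sqrt 2"
    by (rule tendsto_lowerbound) simp
qed

lemma filterlim_period_T_at_top: "filterlim period_T at_top (at_left (sqrt 2))"
proof (rule filterlim_at_top_mono)
  show "filterlim (\<lambda>po. root 4 (1 / (1728 * (1 - po / sqrt 2)))) at_top (at_left (sqrt 2))"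
    by real_asymp
  show "\<forall>\<^sub>F po in at_left (sqrt 2). root 4 (1 / (1728 * (1 - po / sqrt 2))) \<le> period_T po"
    unfolding eventually_at_left_field
  proof (intro exI[of _ 0] conjI allI impI)
    fix po :: real assume "0 < po" "po < sqrt 2"
    define e where "e = po / sqrt 2"
    have e: "0 < e" "e < 1"
      using \<open>0 < po\<close> \<open>po < sqrt 2\<close> by (simp_all add: e_def field_simps)
    have "1 / (1728 * (1 - e)) \<le> period e ^ 4"
      using period_blowup[of e] e by (simp add: divide_le_eq mult.commute)
    then have "root 4 (1 / (1728 * (1 - e))) \<le> root 4 (period e ^ 4)"
      by simp
    also have "\<dots> = period e"
      using period_ge[of e] e by (intro real_root_power_cancel) (simp_all add: order_trans[OF _ period_ge])
    finally show "root 4 (1 / (1728 * (1 - po / sqrt 2))) \<le> period_T po"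
      using \<open>0 < po\<close> \<open>po < sqrt 2\<close> by (simp add: period_T_eq e_def)
  qed simp
qed

theorem lemma5p14:
  shows "continuous_on {0<..<sqrt 2} period_T
    \<and> strict_mono_on {0<..<sqrt 2} period_T
    \<and> (INF po\<in>{0<..<sqrt 2}. period_T po) = pi / sqrt 2
    \<and> filterlim period_T at_top (at_left (sqrt 2))"
  by (intro conjI continuous_on_period_T strict_mono_on_period_T INF_period_T filterlim_period_T_at_top)

end
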